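(* Let $K$ be a positive integer dividing $T$ and let $\epsilon,\delta,\alpha>0$. Consider the sequence $\{\widetilde{\mathbf y}_{m}\}$ produced by Algorithm DPP (described in the context) with these parameters. Fix an interval $[s,e]$, $1\le s<e\le T$, and suppose $\widehat{\mathcal K}_{s,e}:=\{\mathbf x\in\mathcal K:\ g_t(\mathbf x)\le0\ \forall t\in[s,e]\}\neq\emptyset$. Then $$\sum_{t=s}^{e}f_t(\widetilde{\mathbf y}_{m(t)})-\min_{\mathbf x\in\widehat{\mathcal K}_{s,e}}\sum_{t=s}^{e}f_t(\mathbf x)\le 2KR(2G_f+R\alpha)+\frac{G_f^2}{2\alpha}T,$$ and for every $c>0$, $$\sum_{t=s}^{e}g_t^+(\widetilde{\mathbf y}_{m(t)})\le\frac{G_g^2}{2c}T+2cR\Big(\frac{G_fT}{\alpha}+RK\Big)+\frac{2\alpha R^2}{\delta}+\Big(\frac{G_f}{\alpha}+4R\Big)\frac{G_fT}{2\delta K}+4KRG_g.$$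
   Context: Let $\mathcal K\subset\mathbb R^n$ be convex and compact with $\mathbf 0\in\mathcal K\subseteq R\mathcal B$, where $\mathcal B$ is the closed origin-centered unit Euclidean ball and $R>0$. There are $T$ rounds with an arbitrary sequence of functions $f_1,\dots,f_T,g_1,\dots,g_T:\mathbb R^n\to\mathbb R$, each convex on $R\mathcal B$, such that every subgradient of every $f_t$ (resp. $g_t$) at points of $R\mathcal B$ has Euclidean norm at most $G_f$ (resp. $G_g$). Write $g_t^+(\mathbf x)=\max\{g_t(\mathbf x),0\}$. At the end of round $t$ the functions $f_t,g_t$ are revealed to the algorithm. For a block size $K$ (a positive integer dividing $T$) let $m(t)=\lceil t/K\rceil$ and $\mathcal T_m=\{(m-1)K+1,\dots,mK\}$ for $m\in[T/K]$. Linear optimization oracle (LOO) of a convex compact set $S$: given $\mathbf c\in\mathbb R^n$, returns some point of $\arg\min_{\mathbf x\in S}\mathbf c^\top\mathbf x$. Procedure FW$(\mathbf x_1,\mathbf y,\epsilon;S)$ with $\mathbf x_1\in S$: for $i=1,2,\dots$: call the LOO of $S$ to get $\mathbf v_i\in\arg\min_{\mathbf x\in S}(\mathbf x_i-\mathbf y)^\top\mathbf x$; if $(\mathbf x_i-\mathbf y)^\top(\mathbf x_i-\mathbf v_i)\le\epsilon$ or $\|\mathbf x_i-\mathbf y\|^2\le 3\epsilon$, return $\mathbf x_i$; otherwise let $\sigma_i\in\arg\min_{\sigma\in[0,1]}\|\mathbf y-\mathbf x_i-\sigma(\mathbf v_i-\mathbf x_i)\|^2$ and $\mathbf x_{i+1}=\mathbf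 x_i+\sigma_i(\mathbf v_i-\mathbf x_i)$. Procedure $\mathcal O_{AFP}(\mathbf y_1,\mathbf x_0,\epsilon,S)$ with $\mathbf x_0\in S$: if $\|\mathbf x_0-\mathbf y_1\|^2\le3\epsilon$ return $(\mathbf x_0,\mathbf y_1)$. Otherwise for $i=1,2,\dots$: $\mathbf x_i=$FW$(\mathbf x_{i-1},\mathbf y_i,\epsilon;S)$; if $\|\mathbf x_i-\mathbf y_i\|^2>3\epsilon$ set $\mathbf y_{i+1}=\mathbf y_i-\frac23(\mathbf y_i-\mathbf x_i)$, else return $(\mathbf x_i,\mathbf y_i)$. Algorithm DPP (parameters $T,K,\epsilon,\delta,\alpha>0$): set $\mathbf x_1=\widetilde{\mathbf y}_1$ to an arbitrary point of $\mathcal K$. For $m=1,\dots,T/K$: for each $t\in\mathcal T_m$, play $\mathbf x_m$, observe $f_t,g_t$, and pick $\nabla_t\in\partial f_t(\widetilde{\mathbf y}_m)$. Then set $\bar\nabla_m=\frac1K\sum_{t\in\mathcal T_m}\nabla_t$, $G_m^+(\mathbf x)=\delta\sum_{t\in\mathcal T_m}g_t^+(\mathbf x)$, $\mathbf y_{m+1}=\arg\min_{\mathbf x\in R\mathcal B}\{h_m(\mathbf x):=\bar\nabla_m^\top(\mathbf x-\widetilde{\mathbf y}_m)+G_m^+(\mathbf x)+\frac\alpha2\|\mathbf x-\widetilde{\mathbf y}_m\|^2\}$, and $(\mathbf x_{m+1},\widetilde{\mathbf y}_{m+1})=\mathcal O_{AFP}(\mathbf y_{m+1},\mathbf x_m,\epsilon,\mathcal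 K)$. On round $t$ the played point is $\mathbf x_{m(t)}$. *)

theory Defs
  imports "HOL-Analysis.Analysis"
begin

definition subgradients :: "('a::real_inner \<Rightarrow> real) \<Rightarrow> 'a \<Rightarrow> 'a set" where
  "subgradients f x = {g. \<forall>y. f y \<ge> f x + inner g (y - x)}"

definition blk :: "nat \<Rightarrow> nat \<Rightarrow> nat" where
  "blk K t = nat \<lceil>real t / real K\<rceil>"

definition block :: "nat \<Rightarrow> nat \<Rightarrow> nat set" where
  "block K m = {(m - 1) * K + 1 .. m * K}"

definition loo :: "'a::real_inner set \<Rightarrow> 'a \<Rightarrow> 'a \<Rightarrow> bool" where
  "loo S c v \<longleftrightarrow> is_arg_min (\<lambda>z. inner c z) (\<lambda>z. z \<in> S) v"

text \<open>fw_ret S eps y x xo: the procedure FW(x, y, eps; S), started at x, can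
  terminate and return xo (for some admissible choice of LOO answers / line search).\<close>
inductive fw_ret :: "'a::real_inner set \<Rightarrow> real \<Rightarrow> 'a \<Rightarrow> 'a \<Rightarrow> 'a \<Rightarrow> bool"
  for S eps y where
  stop: "\<lbrakk> loo S (x - y) v;
           inner (x - y) (x - v) \<le> eps \<or> (norm (x - y))\<^sup>2 \<le> 3 * eps \<rbrakk>
         \<Longrightarrow> fw_ret S eps y x x"
| step: "\<lbrakk> loo S (x - y) v;
           \<not> (inner (x - y) (x - v) \<le> eps \<or> (norm (x - y))\<^sup>2 \<le> 3 * eps);
           is_arg_min (\<lambda>\<sigma>. (norm (y - x - \<sigma> *\<^sub>R (v - x)))\<^sup>2) (\<lambda>\<sigma>. \<sigma> \<in> {0..1}) \<sigma>;
           fw_ret S eps y (x + \<sigma> *\<^sub>R (v - x)) xo \<rbrakk>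
         \<Longrightarrow> fw_ret S eps y x xo"

text \<open>Main loop of O_AFP: afp_loop S eps y_i x_{i-1} xo yo.\<close>
inductive afp_loop :: "'a::real_inner set \<Rightarrow> real \<Rightarrow> 'a \<Rightarrow> 'a \<Rightarrow> 'a \<Rightarrow> 'a \<Rightarrow> bool"
  for S eps where
  ret: "\<lbrakk> fw_ret S eps y xp x; (norm (x - y))\<^sup>2 \<le> 3 * eps \<rbrakk>
        \<Longrightarrow> afp_loop S eps y xp x y"
| cont: "\<lbrakk> fw_ret S eps y xp x; (norm (x - y))\<^sup>2 > 3 * eps;
           afp_loop S eps (y - (2/3) *\<^sub>R (y - x)) x xo yo \<rbrakk>
         \<Longrightarrow> afp_loop S eps y xp xo yo"

text \<open>afp S eps y1 x0 xo yo: O_AFP(y1, x0, eps, S) can return (xo, yo).\<close>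
definition afp :: "'a::real_inner set \<Rightarrow> real \<Rightarrow> 'a \<Rightarrow> 'a \<Rightarrow> 'a \<Rightarrow> 'a \<Rightarrow> bool" where
  "afp S eps y1 x0 xo yo \<longleftrightarrow>
     ((norm (x0 - y1))\<^sup>2 \<le> 3 * eps \<and> xo = x0 \<and> yo = y1) \<or>
     ((norm (x0 - y1))\<^sup>2 > 3 * eps \<and> afp_loop S eps y1 x0 xo yo)"

definition dpp_h :: "nat \<Rightarrow> real \<Rightarrow> real \<Rightarrow> (nat \<Rightarrow> 'a::real_inner \<Rightarrow> real)
    \<Rightarrow> (nat \<Rightarrow> 'a) \<Rightarrow> 'a \<Rightarrow> nat \<Rightarrow> 'a \<Rightarrow> real" where
  "dpp_h K \<delta> \<alpha> g grad yt m z =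
     inner ((1 / real K) *\<^sub>R (\<Sum>t\<in>block K m. grad t)) (z - yt)
     + \<delta> * (\<Sum>t\<in>block K m. max (g t z) 0)
     + \<alpha> / 2 * (norm (z - yt))\<^sup>2"

text \<open>dpp_run: x, yt (= tilde y), y (block-indexed) and grad (round-indexed) form a
  possible execution of Algorithm DPP.\<close>
definition dpp_run :: "'a::real_inner set \<Rightarrow> real \<Rightarrow> nat \<Rightarrow> nat \<Rightarrow> real \<Rightarrow> real \<Rightarrow> real
    \<Rightarrow> (nat \<Rightarrow> 'a \<Rightarrow> real) \<Rightarrow> (nat \<Rightarrow> 'a \<Rightarrow> real)
    \<Rightarrow> (nat \<Rightarrow> 'a) \<Rightarrow> (nat \<Rightarrow> 'a) \<Rightarrow> (nat \<Rightarrow> 'a) \<Rightarrow> (nat \<Rightarrow> 'a) \<Rightarrow> bool" where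
  "dpp_run Kset R T K eps \<delta> \<alpha> f g x yt y grad \<longleftrightarrow>
     x 1 \<in> Kset \<and> yt 1 = x 1 \<and>
     (\<forall>m\<in>{1..T div K}.
        (\<forall>t\<in>block K m. grad t \<in> subgradients (f t) (yt m)) \<and>
        is_arg_min (dpp_h K \<delta> \<alpha> g grad (yt m) m) (\<lambda>z. z \<in> cball 0 R) (y (Suc m)) \<and>
        afp Kset eps (y (Suc m)) (x m) (x (Suc m)) (yt (Suc m)))"

end

theory Submission
  imports Defs
begin

text \<open>Within block \<open>m\<close> the algorithm takes one proximal step on the averaged linearised loss
  plus the penalty \<open>\<delta> \<Sum>\<^sub>t max (g t) 0\<close>, followed by an approximate projection onto \<open>Kset\<close>
  which never increases the distance to points of \<open>Kset\<close>. Against any \<open>z\<close> feasible on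
  \<open>[s, e]\<close>, the three-point inequality of the proximal step bounds both the regret of the block
  and its penalty by \<open>\<alpha>/2 (\<parallel>yt m - z\<parallel>\<^sup>2 - \<parallel>yt (Suc m) - z\<parallel>\<^sup>2)\<close> plus Young-inequality error
  terms. Over the blocks lying inside \<open>[s, e]\<close> these distance terms telescope to at most
  \<open>4 R\<^sup>2\<close>, and the at most \<open>2 K\<close> rounds of the two partially covered blocks cost \<open>O(K R G)\<close> by
  Lipschitz continuity. For the constraints, the played point \<open>yt m\<close> is compared with
  \<open>y (Suc m)\<close>, whose distance to it is controlled by the same inequality.\<close>

lemma fw_ret_mem_and_stopping:
  assumes "fw_ret S eps y x xo" "x \<in> S" "convex S"
  shows "xo \<in> S \<and> ((\<forall>z\<in>S. inner (xo - y) (xo - z) \<le> eps) \<or> (norm (xo - y))\<^sup>2 \<le> 3 * eps)"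
  using assms
proof (induction rule: fw_ret.induct)
  case (stop x v)
  have "\<forall>z\<in>S. inner (x - y) v \<le> inner (x - y) z"
    using stop(1) unfolding loo_def is_arg_min_linorder by auto
  then have "\<forall>z\<in>S. inner (x - y) (x - z) \<le> inner (x - y) (x - v)"
    by (auto simp: inner_diff_right)
  then show ?case using stop by fastforce
next
  case (step x v \<sigma> xo)
  have "v \<in> S" using step(1) unfolding loo_def is_arg_min_def by auto
  moreover have "\<sigma> \<in> {0..1}" using step(3) unfolding is_arg_min_def by auto
  ultimately have "(1 - \<sigma>) *\<^sub>R x + \<sigma> *\<^sub>R v \<in> S"
    using step(6) \<open>convex S\<close> by (auto intro: convexD)
  moreover have "x + \<sigma> *\<^sub>R (v - x) = (1 - \<sigma>) *\<^sub>R x + \<sigma> *\<^sub>R v" by (simp add: algebra_simps)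
  ultimately show ?case using step by auto
qed

text \<open>Writing \<open>y' = y - (2/3)(y - x)\<close>, one has
  \<open>\<parallel>y' - z\<parallel>\<^sup>2 = \<parallel>y - z\<parallel>\<^sup>2 - (8/9)\<parallel>y - x\<parallel>\<^sup>2 + (4/3)\<langle>x - y, x - z\<rangle>\<close>.\<close>
lemma afp_update_closer:
  fixes x y z :: "'a::real_inner"
  assumes "inner (x - y) (x - z) \<le> eps" and "3 * eps < (norm (y - x))\<^sup>2"
  shows "norm (y - (2/3) *\<^sub>R (y - x) - z) \<le> norm (y - z)"
proof -
  define u where "u = y - z"
  define w where "w = y - x"
  have "(norm (u - (2/3) *\<^sub>R w))\<^sup>2 = (norm u)\<^sup>2 - 4/3 * inner u w + 4/9 * (norm w)\<^sup>2"
    by (simp add: power2_norm_eq_inner inner_diff_left inner_diff_right inner_commute algebra_simps)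
  moreover have "inner u w = (norm w)\<^sup>2 - inner (x - y) (x - z)"
    unfolding u_def w_def
    by (simp add: power2_norm_eq_inner inner_diff_left inner_diff_right inner_commute algebra_simps)
  moreover have "3 * eps < (norm w)\<^sup>2" using assms(2) unfolding w_def .
  ultimately have "(norm (u - (2/3) *\<^sub>R w))\<^sup>2 \<le> (norm u)\<^sup>2"
    using assms(1) zero_le_power2[of "norm w"] by linarith
  then have "norm (u - (2/3) *\<^sub>R w) \<le> norm u" by (rule power2_le_imp_le) simp
  moreover have "y - (2/3) *\<^sub>R (y - x) - z = u - (2/3) *\<^sub>R w"
    unfolding u_def w_def by (simp add: algebra_simps)
  ultimately show ?thesis unfolding u_def by (simp only:)
qed

lemma afp_loop_nonexpansive:
  fixes S :: "'a::real_inner set"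
  assumes "afp_loop S eps y xp xo yo" "xp \<in> S" "convex S" "y \<in> cball 0 R" "S \<subseteq> cball 0 R"
  shows "xo \<in> S \<and> yo \<in> cball 0 R \<and> (\<forall>z\<in>S. norm (yo - z) \<le> norm (y - z))"
  using assms
proof (induction rule: afp_loop.induct)
  case (ret y xp x)
  then show ?case using fw_ret_mem_and_stopping by blast
next
  case (cont y xp x xo yo)
  from fw_ret_mem_and_stopping[OF cont(1) cont(5) cont(6)] cont(2)
  have xS: "x \<in> S" and ip: "\<forall>z\<in>S. inner (x - y) (x - z) \<le> eps" by auto
  have gap: "3 * eps < (norm (y - x))\<^sup>2" using cont(2) by (simp add: norm_minus_commute)
  have y_split: "y = (1/3) *\<^sub>R y + (2/3) *\<^sub>R y" by (simp flip: scaleR_add_left)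
  have "y - (2/3) *\<^sub>R (y - x) = (1/3) *\<^sub>R y + (2/3) *\<^sub>R x"
    by (subst y_split) (simp add: algebra_simps)
  moreover have "(1/3) *\<^sub>R y + (2/3) *\<^sub>R x \<in> cball (0::'a) R"
    using cont(7) xS cont(8) by (intro convexD[OF convex_cball]) auto
  ultimately have "y - (2/3) *\<^sub>R (y - x) \<in> cball 0 R" by simp
  with cont.IH xS cont(6) cont(8)
  have "xo \<in> S \<and> yo \<in> cball 0 R \<and> (\<forall>z\<in>S. norm (yo - z) \<le> norm (y - (2/3) *\<^sub>R (y - x) - z))"
    by blast
  moreover have "norm (y - (2/3) *\<^sub>R (y - x) - z) \<le> norm (y - z)" if "z \<in> S" for z
    using afp_update_closer[OF _ gap] ip that by blast
  ultimately show ?case by (meson order_trans)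
qed

lemma afp_nonexpansive:
  fixes S :: "'a::real_inner set"
  assumes "afp S eps y1 x0 xo yo" "x0 \<in> S" "convex S" "y1 \<in> cball 0 R" "S \<subseteq> cball 0 R"
  shows "xo \<in> S \<and> yo \<in> cball 0 R \<and> (\<forall>z\<in>S. norm (yo - z) \<le> norm (y1 - z))"
  using assms afp_loop_nonexpansive[of S eps y1 x0 xo yo R] unfolding afp_def by auto

lemma nonneg_if_linear_plus_quadratic_nonneg:
  fixes A B a :: real
  assumes "a > 0" "B \<ge> 0" and nonneg: "\<And>t. 0 < t \<Longrightarrow> t \<le> 1 \<Longrightarrow> 0 \<le> t * A + a/2 * t\<^sup>2 * B"
  shows "A \<ge> 0"
proof (rule ccontr)
  assume "\<not> A \<ge> 0"
  define t where "t = min 1 (- A / (a * B + 1))"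
  have pos: "a * B + 1 > 0" using assms by (simp add: add_nonneg_pos)
  have t: "0 < t" "t \<le> 1" using \<open>\<not> A \<ge> 0\<close> pos unfolding t_def by (auto simp: field_simps)
  have "t \<le> (- A) / (a * B + 1)" unfolding t_def by simp
  then have "t * (a * B + 1) \<le> - A" using pos pos_le_divide_eq by blast
  then have "a/2 * t * B \<le> - A / 2" using t by (simp add: algebra_simps)
  then have "A + a/2 * t * B < 0" using \<open>\<not> A \<ge> 0\<close> by linarith
  then have "t * (A + a/2 * t * B) < 0" using t by (simp add: mult_pos_neg)
  with nonneg[OF t] show False by (simp add: algebra_simps power2_eq_square)
qed

text \<open>Compare \<open>ys\<close> with \<open>(1 - t) ys + t z\<close> and let \<open>t\<close> tend to \<open>0\<close>.\<close>
lemma prox_three_point: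
  fixes \<phi> :: "'a::real_inner \<Rightarrow> real"
  assumes conv: "convex_on C \<phi>" and ys: "ys \<in> C" and z: "z \<in> C" and a: "\<alpha> > 0"
    and min: "\<And>w. w \<in> C \<Longrightarrow> \<phi> ys + \<alpha>/2 * (norm (ys - c))\<^sup>2 \<le> \<phi> w + \<alpha>/2 * (norm (w - c))\<^sup>2"
  shows "\<phi> ys + \<alpha>/2 * (norm (ys - c))\<^sup>2 + \<alpha>/2 * (norm (z - ys))\<^sup>2 \<le> \<phi> z + \<alpha>/2 * (norm (z - c))\<^sup>2"
proof -
  define A where "A = \<phi> z - \<phi> ys + \<alpha> * inner (ys - c) (z - ys)"
  have expand: "(norm ((1 - t) *\<^sub>R ys + t *\<^sub>R z - c))\<^sup>2
        = (norm (ys - c))\<^sup>2 + 2 * t * inner (ys - c) (z - ys) + t\<^sup>2 * (norm (z - ys))\<^sup>2" for t :: real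
  proof -
    have "(1 - t) *\<^sub>R ys + t *\<^sub>R z - c = (ys - c) + t *\<^sub>R (z - ys)" by (simp add: algebra_simps)
    then show ?thesis unfolding power2_norm_eq_inner
      by (simp add: inner_add_left inner_add_right inner_commute algebra_simps power2_eq_square)
  qed
  have "0 \<le> t * A + \<alpha>/2 * t\<^sup>2 * (norm (z - ys))\<^sup>2" if t: "0 < t" "t \<le> 1" for t :: real
  proof -
    have "(1 - t) *\<^sub>R ys + t *\<^sub>R z \<in> C"
      using convex_on_imp_convex[OF conv] ys z t by (intro convexD) auto
    from min[OF this]
    have "\<phi> ys + \<alpha>/2 * (norm (ys - c))\<^sup>2
        \<le> \<phi> ((1 - t) *\<^sub>R ys + t *\<^sub>R z) + \<alpha>/2 * (norm ((1 - t) *\<^sub>R ys + t *\<^sub>R z - c))\<^sup>2" .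
    also have "\<dots> \<le> (1 - t) * \<phi> ys + t * \<phi> z
        + \<alpha>/2 * ((norm (ys - c))\<^sup>2 + 2 * t * inner (ys - c) (z - ys) + t\<^sup>2 * (norm (z - ys))\<^sup>2)"
      using convex_onD[OF conv, of t ys z] ys z t expand[of t] by simp
    finally show ?thesis unfolding A_def by (simp add: algebra_simps)
  qed
  then have "A \<ge> 0" by (rule nonneg_if_linear_plus_quadratic_nonneg[OF a zero_le_power2])
  moreover from expand[of 1]
  have "(norm (z - c))\<^sup>2 = (norm (ys - c))\<^sup>2 + 2 * inner (ys - c) (z - ys) + (norm (z - ys))\<^sup>2"
    by simp
  then have "\<alpha>/2 * (norm (z - c))\<^sup>2
      = \<alpha>/2 * (norm (ys - c))\<^sup>2 + \<alpha> * inner (ys - c) (z - ys) + \<alpha>/2 * (norm (z - ys))\<^sup>2"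
    by (simp add: ring_distribs)
  ultimately show ?thesis unfolding A_def by linarith
qed

lemma convex_on_pos_part:
  assumes "convex_on S h"
  shows "convex_on S (\<lambda>w. max (h w) 0)"
proof (rule convex_onI)
  fix t :: real and x y assume t: "0 < t" "t < 1" and xy: "x \<in> S" "y \<in> S"
  have "h ((1 - t) *\<^sub>R x + t *\<^sub>R y) \<le> (1 - t) * h x + t * h y"
    using convex_onD[OF assms] t xy by simp
  moreover have "(1 - t) * h x \<le> (1 - t) * max (h x) 0" "t * h y \<le> t * max (h y) 0"
    using t by (intro mult_left_mono; simp)+
  moreover have "0 \<le> (1 - t) * max (h x) 0 + t * max (h y) 0" using t by simp
  ultimately show "max (h ((1 - t) *\<^sub>R x + t *\<^sub>R y)) 0 \<le> (1 - t) * max (h x) 0 + t * max (h y) 0"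
    by linarith
qed (rule convex_on_imp_convex[OF assms])

lemma convex_on_sum_fun:
  assumes "finite I" "convex S" "\<And>i. i \<in> I \<Longrightarrow> convex_on S (h i)"
  shows "convex_on S (\<lambda>w. \<Sum>i\<in>I. h i w)"
  using assms by (induction I rule: finite_induct) (auto simp: convex_on_const)

lemma convex_on_inner_left:
  assumes "convex S"
  shows "convex_on S (\<lambda>w. inner n (w - c))"
proof (rule convex_onI)
  fix t :: real and x y
  have "(1 - t) *\<^sub>R x + t *\<^sub>R y - c = (1 - t) *\<^sub>R (x - c) + t *\<^sub>R (y - c)" by (simp add: algebra_simps)
  then show "inner n ((1 - t) *\<^sub>R x + t *\<^sub>R y - c) \<le> (1 - t) * inner n (x - c) + t * inner n (y - c)"
    by (simp add: inner_add_right)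
qed (rule assms)

lemma subgradient_bounded_diff_le:
  fixes h :: "'a::real_inner \<Rightarrow> real"
  assumes "\<And>z. z \<in> C \<Longrightarrow> subgradients h z \<noteq> {} \<and> (\<forall>d\<in>subgradients h z. norm d \<le> G)"
    and "a \<in> C"
  shows "h a - h b \<le> G * norm (a - b)"
proof -
  obtain d where d: "d \<in> subgradients h a" and nd: "norm d \<le> G" using assms by blast
  have "h a - h b \<le> inner d (a - b)"
    using d unfolding subgradients_def by (auto simp: inner_diff_right dest: spec[of _ b])
  also have "\<dots> \<le> norm d * norm (a - b)" by (rule norm_cauchy_schwarz)
  also have "\<dots> \<le> G * norm (a - b)" using nd by (simp add: mult_right_mono)
  finally show ?thesis .
qed

lemma norm_diff_le_double_radius:
  fixes a b :: "'a::real_normed_vector"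
  assumes "a \<in> cball 0 R" "b \<in> cball 0 R"
  shows "norm (a - b) \<le> 2 * R"
  using assms norm_triangle_ineq4[of a b] by simp

lemma mult_le_Young_quadratic:
  fixes a b c :: real
  assumes "c > 0"
  shows "a * b \<le> a\<^sup>2 / (2 * c) + c / 2 * b\<^sup>2"
proof -
  have "a\<^sup>2 / (2 * c) + c / 2 * b\<^sup>2 - a * b = (a - c * b)\<^sup>2 / (2 * c)"
    using assms by (simp add: field_simps power2_eq_square)
  moreover have "(a - c * b)\<^sup>2 / (2 * c) \<ge> 0" using assms by simp
  ultimately show ?thesis by linarith
qed

lemma sum_telescope_le:
  fixes D :: "nat \<Rightarrow> real"
  assumes "\<And>m. 0 \<le> D m" and "\<And>m. a \<le> m \<Longrightarrow> m \<le> b \<Longrightarrow> D m \<le> B" and "0 \<le> B"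
  shows "(\<Sum>m=a..b. D m - D (Suc m)) \<le> B"
proof (cases "a \<le> b")
  case True
  have "(\<Sum>m=a..b. D m - D (Suc m)) = - (\<Sum>m=a..b. D (Suc m) - D m)"
    by (simp add: sum_negf[symmetric])
  also have "\<dots> = D a - D (Suc b)" using sum_Suc_diff[of a b D] True by simp
  finally show ?thesis using assms(1)[of "Suc b"] assms(2)[of a] True by simp
qed (use assms(3) in simp)

lemma blk_eq_iff_mem_block:
  assumes "K > 0" "1 \<le> m"
  shows "blk K t = m \<longleftrightarrow> t \<in> block K m"
proof -
  have "blk K t = m \<longleftrightarrow> \<lceil>real t / real K\<rceil> = int m"
    unfolding blk_def using assms(2) by auto
  also have "\<dots> \<longleftrightarrow> real m - 1 < real t / real K \<and> real t / real K \<le> real m"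
    by (simp add: ceiling_eq_iff)
  also have "\<dots> \<longleftrightarrow> (real m - 1) * real K < real t \<and> real t \<le> real m * real K"
    using assms(1) by (simp add: field_simps)
  also have "\<dots> \<longleftrightarrow> (m - 1) * K < t \<and> t \<le> m * K"
  proof -
    have "(real m - 1) * real K = real ((m - 1) * K)" using assms(2) by (simp add: of_nat_diff)
    then show ?thesis by (metis of_nat_less_iff of_nat_le_iff of_nat_mult)
  qed
  also have "\<dots> \<longleftrightarrow> t \<in> block K m" unfolding block_def by auto
  finally show ?thesis .
qed

lemma blk_eq_of_mem_block: "K > 0 \<Longrightarrow> 1 \<le> m \<Longrightarrow> t \<in> block K m \<Longrightarrow> blk K t = m"
  using blk_eq_iff_mem_block by blast

lemma blk_bounds:
  assumes "K > 0" "1 \<le> t" "t \<le> n * K"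
  shows "1 \<le> blk K t \<and> blk K t \<le> n"
proof -
  have "0 < real t / real K" using assms by simp
  moreover have "real t / real K \<le> real n"
    using assms by (simp add: field_simps) (metis of_nat_le_iff of_nat_mult)
  ultimately have "1 \<le> \<lceil>real t / real K\<rceil>" "\<lceil>real t / real K\<rceil> \<le> int n"
    by (simp_all add: ceiling_le_iff)
  then show ?thesis unfolding blk_def by linarith
qed

lemma card_block: "1 \<le> m \<Longrightarrow> card (block K m) = K"
  unfolding block_def by (cases m) auto

definition full_blocks :: "nat \<Rightarrow> nat \<Rightarrow> nat \<Rightarrow> nat \<Rightarrow> nat set" where
  "full_blocks K n s e = {m \<in> {1..n}. block K m \<subseteq> {s..e}}"

lemma card_full_blocks_le: "card (full_blocks K n s e) \<le> n"
proof -
  have "card (full_blocks K n s e) \<le> card {1..n}"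
    by (rule card_mono) (auto simp: full_blocks_def)
  then show ?thesis by simp
qed

lemma finite_order_convex_eq_atLeastAtMost:
  fixes M :: "nat set"
  assumes "finite M" "M \<noteq> {}"
    and "\<And>a b c. a \<in> M \<Longrightarrow> b \<in> M \<Longrightarrow> a \<le> c \<Longrightarrow> c \<le> b \<Longrightarrow> c \<in> M"
  shows "M = {Min M..Max M}"
proof
  show "M \<subseteq> {Min M..Max M}" using assms(1) by (auto intro: Min_le Max_ge)
  show "{Min M..Max M} \<subseteq> M"
    using assms(3)[OF Min_in[OF assms(1,2)] Max_in[OF assms(1,2)]] by auto
qed

lemma full_blocks_eq_atLeastAtMost:
  assumes "K > 0"
  obtains a b where "1 \<le> a" "b \<le> n" "full_blocks K n s e = {a..b}"
proof (cases "full_blocks K n s e = {}")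
  case True
  then show ?thesis using that[of 1 0] by simp
next
  case False
  let ?M = "full_blocks K n s e"
  have fin: "finite ?M" unfolding full_blocks_def by simp
  have "?M = {Min ?M..Max ?M}"
  proof (rule finite_order_convex_eq_atLeastAtMost[OF fin False])
    fix a b c assume a: "a \<in> ?M" and b: "b \<in> ?M" and ac: "a \<le> c" and cb: "c \<le> b"
    have "(a - 1) * K + 1 \<in> block K a" "b * K \<in> block K b"
      using a b ac cb assms unfolding full_blocks_def block_def by (cases a; cases b; auto)+
    then have "s \<le> (a - 1) * K + 1" "b * K \<le> e" using a b unfolding full_blocks_def by auto
    moreover have "(a - 1) * K \<le> (c - 1) * K" using ac by (intro mult_le_mono1 diff_le_mono)
    moreover have "c * K \<le> b * K" using cb by simp
    ultimately have "s \<le> (c - 1) * K + 1" "c * K \<le> e" by linarith+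
    then have "block K c \<subseteq> {s..e}" unfolding block_def by auto
    then show "c \<in> ?M" using a b ac cb unfolding full_blocks_def by auto
  qed
  moreover have "1 \<le> Min ?M" "Max ?M \<le> n"
    using Min_in[OF fin False] Max_in[OF fin False] unfolding full_blocks_def by auto
  ultimately show ?thesis using that by blast
qed

lemma sum_full_blocks_telescope_le:
  fixes D :: "nat \<Rightarrow> real"
  assumes "K > 0" "\<And>m. 0 \<le> D m" "\<And>m. 1 \<le> m \<Longrightarrow> m \<le> n \<Longrightarrow> D m \<le> B" "0 \<le> B"
  shows "(\<Sum>m\<in>full_blocks K n s e. D m - D (Suc m)) \<le> B"
proof -
  obtain a b where "1 \<le> a" "b \<le> n" "full_blocks K n s e = {a..b}"
    using full_blocks_eq_atLeastAtMost[OF assms(1)] .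
  then show ?thesis using assms(2-4) by (auto intro: sum_telescope_le)
qed

lemma sum_rounds_split_blocks:
  assumes "K > 0"
  shows "(\<Sum>t=s..e. \<phi> t) = (\<Sum>m\<in>full_blocks K n s e. \<Sum>t\<in>block K m. \<phi> t)
           + (\<Sum>t\<in>{t\<in>{s..e}. blk K t \<notin> full_blocks K n s e}. \<phi> t)"
proof -
  let ?M = "full_blocks K n s e"
  let ?F = "{t\<in>{s..e}. blk K t \<in> ?M}"
  have "{t. t \<in> ?F \<and> blk K t = m} = block K m" if m: "m \<in> ?M" for m
  proof (intro set_eqI iffI)
    have blk_iff: "blk K t = m \<longleftrightarrow> t \<in> block K m" for t
      using blk_eq_iff_mem_block[OF assms] m unfolding full_blocks_def by auto
    fix t
    show "t \<in> {t. t \<in> ?F \<and> blk K t = m} \<Longrightarrow> t \<in> block K m" using blk_iff by auto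
    show "t \<in> block K m \<Longrightarrow> t \<in> {t. t \<in> ?F \<and> blk K t = m}"
      using blk_iff[of t] m unfolding full_blocks_def by auto
  qed
  then have "(\<Sum>m\<in>?M. \<Sum>t\<in>block K m. \<phi> t) = (\<Sum>m\<in>?M. \<Sum>t\<in>{t. t \<in> ?F \<and> blk K t = m}. \<phi> t)"
    by simp
  also have "\<dots> = (\<Sum>t\<in>?F. \<phi> t)"
    by (rule sum.group) (auto simp: full_blocks_def)
  finally have "(\<Sum>m\<in>?M. \<Sum>t\<in>block K m. \<phi> t) = (\<Sum>t\<in>?F. \<phi> t)" .
  moreover have "(\<Sum>t=s..e. \<phi> t) = (\<Sum>t\<in>{s..e} - ?F. \<phi> t) + (\<Sum>t\<in>?F. \<phi> t)"
    by (rule sum.subset_diff) auto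
  moreover have "{s..e} - ?F = {t\<in>{s..e}. blk K t \<notin> ?M}" by auto
  ultimately show ?thesis by (simp add: add.commute)
qed

lemma card_boundary_rounds_le:
  assumes "K > 0" "1 \<le> s" "e \<le> n * K"
  shows "card {t\<in>{s..e}. blk K t \<notin> full_blocks K n s e} \<le> 2 * K"
proof -
  have "{t\<in>{s..e}. blk K t \<notin> full_blocks K n s e} \<subseteq> {s..<s+K} \<union> {e+1-K..e}"
  proof
    fix t assume t: "t \<in> {t\<in>{s..e}. blk K t \<notin> full_blocks K n s e}"
    define m where "m = blk K t"
    have "1 \<le> t" "t \<le> n * K" using t assms(2,3) by auto
    then have m: "1 \<le> m" "m \<le> n" using blk_bounds[OF assms(1)] unfolding m_def by auto
    have tb: "t \<in> block K m" using blk_eq_iff_mem_block[OF assms(1) m(1), of t] m_def by simp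
    have nb: "\<not> block K m \<subseteq> {s..e}" using t m unfolding full_blocks_def m_def by auto
    show "t \<in> {s..<s+K} \<union> {e+1-K..e}"
    proof (rule ccontr)
      assume "t \<notin> {s..<s+K} \<union> {e+1-K..e}"
      then have "s + K \<le> t" "t + K \<le> e" using t by auto
      moreover have "m * K = (m - 1) * K + K" using m(1) by (cases m) auto
      ultimately have "block K m \<subseteq> {s..e}" using tb unfolding block_def by auto
      with nb show False by simp
    qed
  qed
  then have "card {t\<in>{s..e}. blk K t \<notin> full_blocks K n s e} \<le> card ({s..<s+K} \<union> {e+1-K..e})"
    by (rule card_mono[rotated]) simp
  also have "\<dots> \<le> card {s..<s+K} + card {e+1-K..e}" by (rule card_Un_le)
  also have "\<dots> \<le> 2 * K" by simp
  finally show ?thesis .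
qed

lemma sum_rounds_le_blockwise:
  fixes \<phi> b :: "nat \<Rightarrow> real"
  assumes "K > 0" "1 \<le> s" "e \<le> n * K"
    and block_le: "\<And>m. m \<in> full_blocks K n s e \<Longrightarrow> (\<Sum>t\<in>block K m. \<phi> t) \<le> b m"
    and round_le: "\<And>t. s \<le> t \<Longrightarrow> t \<le> e \<Longrightarrow> \<phi> t \<le> C" and "0 \<le> C"
  shows "(\<Sum>t=s..e. \<phi> t) \<le> (\<Sum>m\<in>full_blocks K n s e. b m) + 2 * K * C"
proof -
  let ?B = "{t\<in>{s..e}. blk K t \<notin> full_blocks K n s e}"
  have "(\<Sum>t\<in>?B. \<phi> t) \<le> card ?B * C" using round_le by (intro sum_bounded_above) auto
  also have "\<dots> \<le> 2 * K * C"
    using card_boundary_rounds_le[OF assms(1-3)] \<open>0 \<le> C\<close> by (intro mult_right_mono) auto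
  finally have "(\<Sum>t\<in>?B. \<phi> t) \<le> 2 * K * C" .
  moreover have "(\<Sum>m\<in>full_blocks K n s e. \<Sum>t\<in>block K m. \<phi> t) \<le> (\<Sum>m\<in>full_blocks K n s e. b m)"
    using block_le by (rule sum_mono)
  ultimately show ?thesis
    using sum_rounds_split_blocks[OF assms(1), where n = n and \<phi> = \<phi> and s = s and e = e] by linarith
qed

locale dpp_execution =
  fixes Kset :: "'a::real_inner set"
    and R Gf Gg eps \<delta> \<alpha> :: real and T K :: nat
    and f g :: "nat \<Rightarrow> 'a \<Rightarrow> real"
    and x yt y grad :: "nat \<Rightarrow> 'a"
  assumes Kconv: "convex Kset" and KR: "Kset \<subseteq> cball 0 R" and Rpos: "R > 0"
    and gconv: "\<And>t. convex_on (cball 0 R) (g t)"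
    and fsub: "\<And>t z. z \<in> cball 0 R \<Longrightarrow> subgradients (f t) z \<noteq> {}
                     \<and> (\<forall>d\<in>subgradients (f t) z. norm d \<le> Gf)"
    and gsub: "\<And>t z. z \<in> cball 0 R \<Longrightarrow> subgradients (g t) z \<noteq> {}
                     \<and> (\<forall>d\<in>subgradients (g t) z. norm d \<le> Gg)"
    and Kpos: "K > 0" and Kdvd: "K dvd T" and dpos: "\<delta> > 0" and apos: "\<alpha> > 0"
    and run: "dpp_run Kset R T K eps \<delta> \<alpha> f g x yt y grad"
begin

abbreviation nblocks :: nat where "nblocks \<equiv> T div K"

lemma T_eq: "T = nblocks * K"
  using Kdvd by simp

lemma grad_subgradient:
  "m \<in> {1..nblocks} \<Longrightarrow> t \<in> block K m \<Longrightarrow> grad t \<in> subgradients (f t) (yt m)"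
  using run unfolding dpp_run_def by blast

lemma y_argmin:
  "m \<in> {1..nblocks} \<Longrightarrow> is_arg_min (dpp_h K \<delta> \<alpha> g grad (yt m) m) (\<lambda>z. z \<in> cball 0 R) (y (Suc m))"
  using run unfolding dpp_run_def by blast

lemma afp_step:
  "m \<in> {1..nblocks} \<Longrightarrow> afp Kset eps (y (Suc m)) (x m) (x (Suc m)) (yt (Suc m))"
  using run unfolding dpp_run_def by blast

lemma y_mem_cball: "m \<in> {1..nblocks} \<Longrightarrow> y (Suc m) \<in> cball 0 R"
  using y_argmin unfolding is_arg_min_def by blast

lemma iterates_mem:
  "1 \<le> m \<Longrightarrow> m \<le> nblocks + 1 \<Longrightarrow> x m \<in> Kset \<and> yt m \<in> cball 0 R"
proof (induction m)
  case (Suc n)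
  show ?case
  proof (cases "n = 0")
    case True
    then show ?thesis using run KR unfolding dpp_run_def by auto
  next
    case False
    then have n: "n \<in> {1..nblocks}" using Suc.prems by auto
    with Suc.IH have "x n \<in> Kset" by auto
    then show ?thesis
      using afp_nonexpansive[OF afp_step[OF n] _ Kconv y_mem_cball[OF n] KR] by blast
  qed
qed simp

lemma yt_mem_cball: "1 \<le> m \<Longrightarrow> m \<le> nblocks + 1 \<Longrightarrow> yt m \<in> cball 0 R"
  using iterates_mem by blast

lemma yt_Suc_closer:
  assumes "m \<in> {1..nblocks}" "z \<in> Kset"
  shows "norm (yt (Suc m) - z) \<le> norm (y (Suc m) - z)"
  using afp_nonexpansive[OF afp_step[OF assms(1)] _ Kconv y_mem_cball[OF assms(1)] KR]
    iterates_mem[of m] assms by auto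

lemma yt_round_mem_cball: "1 \<le> t \<Longrightarrow> t \<le> T \<Longrightarrow> yt (blk K t) \<in> cball 0 R"
  using blk_bounds[OF Kpos, of t nblocks] T_eq yt_mem_cball by auto

lemma Gf_nonneg: "0 \<le> Gf"
proof -
  obtain d where "d \<in> subgradients (f 0) 0" "norm d \<le> Gf" using fsub[of 0 0] Rpos by fastforce
  then show ?thesis using norm_ge_zero[of d] by linarith
qed

lemma Gg_nonneg: "0 \<le> Gg"
proof -
  obtain d where "d \<in> subgradients (g 0) 0" "norm d \<le> Gg" using gsub[of 0 0] Rpos by fastforce
  then show ?thesis using norm_ge_zero[of d] by linarith
qed

lemma pos_part_g_diff_le:
  assumes "a \<in> cball 0 R" "b \<in> cball 0 R"
  shows "max (g t a) 0 - max (g t b) 0 \<le> Gg * norm (a - b)"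
proof -
  have "g t a - g t b \<le> Gg * norm (a - b)"
    by (rule subgradient_bounded_diff_le[OF gsub assms(1)])
  moreover have "g t b - g t a \<le> Gg * norm (a - b)"
    using subgradient_bounded_diff_le[OF gsub assms(2), of t a] by (simp add: norm_minus_commute)
  moreover have "0 \<le> Gg * norm (a - b)" using Gg_nonneg by simp
  ultimately show ?thesis by (auto simp: max_def)
qed

definition avg_grad :: "nat \<Rightarrow> 'a" where
  "avg_grad m = (1 / real K) *\<^sub>R (\<Sum>t\<in>block K m. grad t)"

definition penalty :: "nat \<Rightarrow> 'a \<Rightarrow> real" where
  "penalty m w = \<delta> * (\<Sum>t\<in>block K m. max (g t w) 0)"

definition potential_drop :: "'a \<Rightarrow> nat \<Rightarrow> real" where
  "potential_drop z m = (norm (yt m - z))\<^sup>2 - (norm (yt (Suc m) - z))\<^sup>2"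

lemma dpp_h_eq:
  "dpp_h K \<delta> \<alpha> g grad c m w = inner (avg_grad m) (w - c) + penalty m w + \<alpha>/2 * (norm (w - c))\<^sup>2"
  unfolding dpp_h_def avg_grad_def penalty_def by simp

lemma sum_grad_eq: "(\<Sum>t\<in>block K m. grad t) = real K *\<^sub>R avg_grad m"
  unfolding avg_grad_def using Kpos by simp

lemma norm_avg_grad_le:
  assumes "m \<in> {1..nblocks}"
  shows "norm (avg_grad m) \<le> Gf"
proof -
  have ytm: "yt m \<in> cball 0 R" using assms by (intro yt_mem_cball) auto
  have "real K * norm (avg_grad m) = norm (\<Sum>t\<in>block K m. grad t)" by (simp add: sum_grad_eq)
  also have "\<dots> \<le> (\<Sum>t\<in>block K m. norm (grad t))" by (rule norm_sum)
  also have "\<dots> \<le> (\<Sum>t\<in>block K m. Gf)"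
    using grad_subgradient[OF assms] fsub[OF ytm] by (intro sum_mono) blast
  also have "\<dots> = real K * Gf" using card_block assms by simp
  finally show ?thesis using Kpos by simp
qed

lemma convex_on_penalty: "convex_on (cball 0 R) (penalty m)"
  unfolding penalty_def[abs_def] using dpos
  by (intro convex_on_cmul convex_on_sum_fun convex_on_pos_part gconv convex_cball)
    (auto simp: block_def)

lemma penalty_nonneg: "0 \<le> penalty m w"
  unfolding penalty_def using dpos by (simp add: sum_nonneg)

lemma penalty_eq_0: "\<forall>t\<in>block K m. g t z \<le> 0 \<Longrightarrow> penalty m z = 0"
  unfolding penalty_def by (auto intro!: sum.neutral simp: max_absorb2)

text \<open>The three-point inequality of the proximal step; since the approximate projection
  only brings \<open>yt (Suc m)\<close> closer to \<open>z\<close>, its distance terms become the potential drop.\<close>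
lemma block_descent:
  assumes m: "m \<in> {1..nblocks}" and z: "z \<in> Kset" and feas: "\<forall>t\<in>block K m. g t z \<le> 0"
  shows "inner (avg_grad m) (y (Suc m) - yt m) + penalty m (y (Suc m))
           + \<alpha>/2 * (norm (y (Suc m) - yt m))\<^sup>2
         \<le> inner (avg_grad m) (z - yt m) + \<alpha>/2 * potential_drop z m"
proof -
  define \<phi> where "\<phi> w = inner (avg_grad m) (w - yt m) + penalty m w" for w
  have zR: "z \<in> cball 0 R" using z KR by auto
  have "convex_on (cball 0 R) \<phi>"
    unfolding \<phi>_def[abs_def]
    by (intro convex_on_add convex_on_inner_left convex_on_penalty convex_cball)
  moreover have "\<phi> (y (Suc m)) + \<alpha>/2 * (norm (y (Suc m) - yt m))\<^sup>2 \<le> \<phi> w + \<alpha>/2 * (norm (w - yt m))\<^sup>2"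
    if "w \<in> cball 0 R" for w
    using y_argmin[OF m] that by (auto simp: is_arg_min_linorder dpp_h_eq \<phi>_def)
  ultimately have "\<phi> (y (Suc m)) + \<alpha>/2 * (norm (y (Suc m) - yt m))\<^sup>2 + \<alpha>/2 * (norm (z - y (Suc m)))\<^sup>2
      \<le> \<phi> z + \<alpha>/2 * (norm (z - yt m))\<^sup>2"
    using prox_three_point y_mem_cball[OF m] zR apos by blast
  then have "\<phi> (y (Suc m)) + \<alpha>/2 * (norm (y (Suc m) - yt m))\<^sup>2 + \<alpha>/2 * (norm (z - y (Suc m)))\<^sup>2
      \<le> \<phi> z + \<alpha>/2 * (norm (yt m - z))\<^sup>2"
    by (simp only: norm_minus_commute[of z "yt m"])
  moreover have "\<alpha>/2 * (norm (yt (Suc m) - z))\<^sup>2 \<le> \<alpha>/2 * (norm (z - y (Suc m)))\<^sup>2"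
    using yt_Suc_closer[OF m z] apos by (intro mult_left_mono power_mono) (auto simp: norm_minus_commute)
  ultimately show ?thesis
    using penalty_eq_0[OF feas] unfolding \<phi>_def potential_drop_def right_diff_distrib by linarith
qed

lemma block_regret:
  assumes m: "m \<in> {1..nblocks}" and z: "z \<in> Kset" and feas: "\<forall>t\<in>block K m. g t z \<le> 0"
  shows "(\<Sum>t\<in>block K m. f t (yt m) - f t z) \<le> K * (\<alpha>/2 * potential_drop z m + Gf\<^sup>2 / (2 * \<alpha>))"
proof -
  let ?N = "avg_grad m" and ?c = "yt m" and ?y = "y (Suc m)"
  have "(\<Sum>t\<in>block K m. f t ?c - f t z) \<le> (\<Sum>t\<in>block K m. inner (grad t) (?c - z))"
  proof (rule sum_mono)
    fix t assume "t \<in> block K m"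
    then have "f t ?c + inner (grad t) (z - ?c) \<le> f t z"
      using grad_subgradient[OF m] unfolding subgradients_def by blast
    then show "f t ?c - f t z \<le> inner (grad t) (?c - z)" by (simp add: inner_diff_right)
  qed
  also have "\<dots> = K * inner ?N (?c - z)" by (simp add: inner_sum_left[symmetric] sum_grad_eq)
  also have "\<dots> \<le> K * (\<alpha>/2 * potential_drop z m + Gf\<^sup>2 / (2 * \<alpha>))"
  proof (rule mult_left_mono)
    have "inner ?N (?c - ?y) \<le> norm ?N * norm (?c - ?y)" by (rule norm_cauchy_schwarz)
    also have "\<dots> \<le> Gf * norm (?y - ?c)"
      using norm_avg_grad_le[OF m] by (simp add: norm_minus_commute mult_right_mono)
    also have "\<dots> \<le> Gf\<^sup>2 / (2 * \<alpha>) + \<alpha>/2 * (norm (?y - ?c))\<^sup>2"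
      by (rule mult_le_Young_quadratic[OF apos])
    finally show "inner ?N (?c - z) \<le> \<alpha>/2 * potential_drop z m + Gf\<^sup>2 / (2 * \<alpha>)"
      using block_descent[OF assms] penalty_nonneg[of m ?y] unfolding inner_diff_right by linarith
  qed simp
  finally show ?thesis .
qed

lemma block_penalty_le:
  assumes m: "m \<in> {1..nblocks}" and z: "z \<in> Kset" and feas: "\<forall>t\<in>block K m. g t z \<le> 0"
  shows "penalty m (y (Suc m)) + \<alpha>/2 * (norm (y (Suc m) - yt m))\<^sup>2
           \<le> \<alpha>/2 * potential_drop z m + 2 * R * Gf"
proof -
  have "inner (avg_grad m) (z - y (Suc m)) \<le> norm (avg_grad m) * norm (z - y (Suc m))"
    by (rule norm_cauchy_schwarz)
  also have "\<dots> \<le> Gf * (2 * R)"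
    using norm_avg_grad_le[OF m] norm_diff_le_double_radius[OF _ y_mem_cball[OF m], of z] z KR Gf_nonneg
    by (intro mult_mono) auto
  also have "\<dots> = 2 * R * Gf" by simp
  finally show ?thesis using block_descent[OF assms] unfolding inner_diff_right by linarith
qed

lemma block_violation:
  fixes c :: real
  assumes m: "m \<in> {1..nblocks}" and z: "z \<in> Kset" and feas: "\<forall>t\<in>block K m. g t z \<le> 0"
    and c: "c > 0"
  shows "(\<Sum>t\<in>block K m. max (g t (yt m)) 0)
     \<le> (\<alpha> / (2 * \<delta>) + K * c / 2) * potential_drop z m + 2 * R * Gf / \<delta>
        + K * (Gg\<^sup>2 / (2 * c) + 2 * c * R * Gf / \<alpha>)"
proof -
  define d where "d = norm (yt m - y (Suc m))"
  define S where "S = (\<Sum>t\<in>block K m. max (g t (y (Suc m))) 0)"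
  have bound: "\<delta> * S + \<alpha>/2 * d\<^sup>2 \<le> \<alpha>/2 * potential_drop z m + 2 * R * Gf"
    using block_penalty_le[OF m z feas] unfolding penalty_def S_def d_def
    by (simp add: norm_minus_commute)
  have "0 \<le> \<delta> * S" unfolding S_def using dpos by (simp add: sum_nonneg)
  have "0 \<le> \<alpha>/2 * d\<^sup>2" using apos by simp
  then have "\<delta> * S \<le> \<alpha>/2 * potential_drop z m + 2 * R * Gf" using bound by linarith
  then have S_le: "S \<le> (\<alpha>/2 * potential_drop z m + 2 * R * Gf) / \<delta>"
    using dpos by (simp add: pos_le_divide_eq mult.commute)
  have "\<alpha> * d\<^sup>2 \<le> \<alpha> * (potential_drop z m + 4 * R * Gf / \<alpha>)"
    using bound \<open>0 \<le> \<delta> * S\<close> apos by (simp add: distrib_left)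
  then have d_le: "d\<^sup>2 \<le> potential_drop z m + 4 * R * Gf / \<alpha>"
    using apos by (simp add: mult_le_cancel_left_pos)
  have "(\<Sum>t\<in>block K m. max (g t (yt m)) 0) \<le> (\<Sum>t\<in>block K m. max (g t (y (Suc m))) 0 + Gg * d)"
    using pos_part_g_diff_le[OF yt_mem_cball y_mem_cball[OF m]] m unfolding d_def
    by (intro sum_mono) (auto simp: algebra_simps)
  also have "\<dots> = S + K * (Gg * d)" using card_block m by (simp add: S_def sum.distrib)
  also have "\<dots> \<le> S + K * (Gg\<^sup>2 / (2 * c) + c/2 * d\<^sup>2)"
    using mult_le_Young_quadratic[OF c] by (intro add_left_mono mult_left_mono) auto
  also have "\<dots> \<le> (\<alpha>/2 * potential_drop z m + 2 * R * Gf) / \<delta>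
                  + K * (Gg\<^sup>2 / (2 * c) + c/2 * (potential_drop z m + 4 * R * Gf / \<alpha>))"
    using S_le d_le c by (intro add_mono mult_left_mono) auto
  also have "\<dots> = (\<alpha> / (2 * \<delta>) + K * c / 2) * potential_drop z m + 2 * R * Gf / \<delta>
                  + K * (Gg\<^sup>2 / (2 * c) + 2 * c * R * Gf / \<alpha>)"
    using dpos apos c by (simp add: field_simps)
  finally show ?thesis .
qed

lemma sum_potential_drop_le:
  assumes "z \<in> Kset"
  shows "(\<Sum>m\<in>full_blocks K nblocks s e. potential_drop z m) \<le> 4 * R\<^sup>2"
  unfolding potential_drop_def
proof (rule sum_full_blocks_telescope_le[OF Kpos, where D = "\<lambda>m. (norm (yt m - z))\<^sup>2"])
  fix m assume "1 \<le> m" "m \<le> nblocks"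
  then have "yt m \<in> cball 0 R" by (intro yt_mem_cball) auto
  moreover have "z \<in> cball 0 R" using assms KR by auto
  ultimately have "norm (yt m - z) \<le> 2 * R" by (rule norm_diff_le_double_radius)
  then have "(norm (yt m - z))\<^sup>2 \<le> (2 * R)\<^sup>2" by (intro power_mono) auto
  then show "(norm (yt m - z))\<^sup>2 \<le> 4 * R\<^sup>2" by (simp add: power_mult_distrib)
qed auto

lemma sum_full_blocks_affine_drop_le:
  fixes P Q :: real
  assumes "z \<in> Kset" "0 \<le> P" "0 \<le> Q"
  shows "(\<Sum>m\<in>full_blocks K nblocks s e. P * potential_drop z m + Q) \<le> P * (4 * R\<^sup>2) + nblocks * Q"
proof -
  have "P * (\<Sum>m\<in>full_blocks K nblocks s e. potential_drop z m) \<le> P * (4 * R\<^sup>2)"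
    using sum_potential_drop_le[OF assms(1)] assms(2) by (rule mult_left_mono)
  moreover have "card (full_blocks K nblocks s e) * Q \<le> nblocks * Q"
    using card_full_blocks_le assms(3) by (intro mult_right_mono) auto
  ultimately show ?thesis by (simp add: sum.distrib sum_distrib_left)
qed

lemma full_block_regret_le:
  assumes "m \<in> full_blocks K nblocks s e" and z: "z \<in> Kset" and feas: "\<forall>t\<in>{s..e}. g t z \<le> 0"
  shows "(\<Sum>t\<in>block K m. f t (yt (blk K t)) - f t z)
           \<le> K * \<alpha> / 2 * potential_drop z m + K * (Gf\<^sup>2 / (2 * \<alpha>))"
proof -
  have m: "m \<in> {1..nblocks}" and sub: "block K m \<subseteq> {s..e}"
    using assms(1) unfolding full_blocks_def by auto
  have "(\<Sum>t\<in>block K m. f t (yt (blk K t)) - f t z) = (\<Sum>t\<in>block K m. f t (yt m) - f t z)"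
    using blk_eq_of_mem_block[OF Kpos] m by (intro sum.cong) auto
  also have "\<dots> \<le> K * (\<alpha>/2 * potential_drop z m + Gf\<^sup>2 / (2 * \<alpha>))"
    using block_regret[OF m z] feas sub by blast
  finally show ?thesis by (simp add: algebra_simps)
qed

lemma full_block_violation_le:
  fixes c :: real
  assumes "m \<in> full_blocks K nblocks s e" and z: "z \<in> Kset" and feas: "\<forall>t\<in>{s..e}. g t z \<le> 0"
    and c: "c > 0"
  shows "(\<Sum>t\<in>block K m. max (g t (yt (blk K t))) 0)
     \<le> (\<alpha> / (2 * \<delta>) + K * c / 2) * potential_drop z m
        + (2 * R * Gf / \<delta> + K * (Gg\<^sup>2 / (2 * c) + 2 * c * R * Gf / \<alpha>))"
proof -
  have m: "m \<in> {1..nblocks}" and sub: "block K m \<subseteq> {s..e}"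
    using assms(1) unfolding full_blocks_def by auto
  have "(\<Sum>t\<in>block K m. max (g t (yt (blk K t))) 0) = (\<Sum>t\<in>block K m. max (g t (yt m)) 0)"
    using blk_eq_of_mem_block[OF Kpos] m by (intro sum.cong) auto
  also have "\<dots> \<le> (\<alpha> / (2 * \<delta>) + K * c / 2) * potential_drop z m + 2 * R * Gf / \<delta>
        + K * (Gg\<^sup>2 / (2 * c) + 2 * c * R * Gf / \<alpha>)"
    using block_violation[OF m z _ c] feas sub by blast
  finally show ?thesis by (simp add: add.assoc)
qed

lemma round_regret_le:
  assumes "1 \<le> t" "t \<le> T" "z \<in> Kset"
  shows "f t (yt (blk K t)) - f t z \<le> Gf * (2 * R)"
proof -
  have yR: "yt (blk K t) \<in> cball 0 R" using assms by (intro yt_round_mem_cball)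
  have zR: "z \<in> cball 0 R" using assms KR by auto
  have "f t (yt (blk K t)) - f t z \<le> Gf * norm (yt (blk K t) - z)"
    by (rule subgradient_bounded_diff_le[OF fsub yR])
  also have "\<dots> \<le> Gf * (2 * R)"
    using norm_diff_le_double_radius[OF yR zR] Gf_nonneg by (rule mult_left_mono)
  finally show ?thesis .
qed

lemma round_violation_le:
  assumes "1 \<le> t" "t \<le> T" "z \<in> Kset" "g t z \<le> 0"
  shows "max (g t (yt (blk K t))) 0 \<le> Gg * (2 * R)"
proof -
  have yR: "yt (blk K t) \<in> cball 0 R" using assms by (intro yt_round_mem_cball)
  have zR: "z \<in> cball 0 R" using assms KR by auto
  have "max (g t (yt (blk K t))) 0 - max (g t z) 0 \<le> Gg * norm (yt (blk K t) - z)"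
    by (rule pos_part_g_diff_le[OF yR zR])
  also have "\<dots> \<le> Gg * (2 * R)"
    using norm_diff_le_double_radius[OF yR zR] Gg_nonneg by (rule mult_left_mono)
  finally show ?thesis using assms(4) by simp
qed

lemma regret_bound:
  assumes se: "1 \<le> s" "e \<le> T" and z: "z \<in> Kset" and feas: "\<forall>t\<in>{s..e}. g t z \<le> 0"
  shows "(\<Sum>t=s..e. f t (yt (blk K t))) - (\<Sum>t=s..e. f t z)
           \<le> 2 * K * R * (2 * Gf + R * \<alpha>) + Gf\<^sup>2 / (2 * \<alpha>) * T"
proof -
  have "(\<Sum>t=s..e. f t (yt (blk K t)) - f t z)
      \<le> (\<Sum>m\<in>full_blocks K nblocks s e. K * \<alpha> / 2 * potential_drop z m + K * (Gf\<^sup>2 / (2 * \<alpha>)))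
         + 2 * real K * (Gf * (2 * R))"
    using se T_eq full_block_regret_le[OF _ z feas] round_regret_le[OF _ _ z] Gf_nonneg Rpos
    by (intro sum_rounds_le_blockwise[OF Kpos se(1)]) auto
  also have "\<dots> \<le> K * \<alpha> / 2 * (4 * R\<^sup>2) + nblocks * (K * (Gf\<^sup>2 / (2 * \<alpha>))) + 2 * real K * (Gf * (2 * R))"
    using sum_full_blocks_affine_drop_le[OF z, where P = "K * \<alpha> / 2" and Q = "K * (Gf\<^sup>2 / (2 * \<alpha>))"]
      apos by simp
  also have "\<dots> = 2 * K * R * (2 * Gf + R * \<alpha>) + Gf\<^sup>2 / (2 * \<alpha>) * T"
    by (subst (2) T_eq) (simp add: algebra_simps power2_eq_square)
  finally show ?thesis by (simp add: sum_subtractf)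
qed

lemma violation_bound:
  fixes c :: real
  assumes se: "1 \<le> s" "e \<le> T" and z: "z \<in> Kset" and feas: "\<forall>t\<in>{s..e}. g t z \<le> 0"
    and c: "c > 0"
  shows "(\<Sum>t=s..e. max (g t (yt (blk K t))) 0)
           \<le> Gg\<^sup>2 / (2 * c) * T + 2 * c * R * (Gf * T / \<alpha> + R * K)
              + 2 * \<alpha> * R\<^sup>2 / \<delta> + (Gf / \<alpha> + 4 * R) * (Gf * T / (2 * \<delta> * K))
              + 4 * K * R * Gg"
proof -
  define P where "P = \<alpha> / (2 * \<delta>) + K * c / 2"
  define Q where "Q = 2 * R * Gf / \<delta> + K * (Gg\<^sup>2 / (2 * c) + 2 * c * R * Gf / \<alpha>)"
  have "(\<Sum>t=s..e. max (g t (yt (blk K t))) 0)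
      \<le> (\<Sum>m\<in>full_blocks K nblocks s e. P * potential_drop z m + Q) + 2 * real K * (Gg * (2 * R))"
    using se T_eq full_block_violation_le[OF _ z feas c] round_violation_le[OF _ _ z] feas Gg_nonneg Rpos
    unfolding P_def Q_def by (intro sum_rounds_le_blockwise[OF Kpos se(1)]) auto
  also have "\<dots> \<le> P * (4 * R\<^sup>2) + nblocks * Q + 4 * K * R * Gg"
    using sum_full_blocks_affine_drop_le[OF z, of P Q] apos dpos c Rpos Gf_nonneg
    unfolding P_def Q_def by simp
  also have "\<dots> \<le> Gg\<^sup>2 / (2 * c) * T + 2 * c * R * (Gf * T / \<alpha> + R * K)
              + 2 * \<alpha> * R\<^sup>2 / \<delta> + (Gf / \<alpha> + 4 * R) * (Gf * T / (2 * \<delta> * K))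
              + 4 * K * R * Gg"
  proof -
    have "real T = real nblocks * K" using T_eq by (metis of_nat_mult)
    then have "Gg\<^sup>2 / (2 * c) * T + 2 * c * R * (Gf * T / \<alpha> + R * K)
              + 2 * \<alpha> * R\<^sup>2 / \<delta> + (Gf / \<alpha> + 4 * R) * (Gf * T / (2 * \<delta> * K))
              + 4 * K * R * Gg
        = P * (4 * R\<^sup>2) + nblocks * Q + 4 * K * R * Gg + Gf\<^sup>2 * nblocks / (2 * \<alpha> * \<delta>)"
      using Kpos apos dpos c unfolding P_def Q_def by (simp add: field_simps power2_eq_square)
    moreover have "0 \<le> Gf\<^sup>2 * nblocks / (2 * \<alpha> * \<delta>)" using apos dpos by simp
    ultimately show ?thesis by linarith
  qed
  finally show ?thesis .
qed

end

theorem lemma2: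
  fixes Kset :: "'a::euclidean_space set"
    and R Gf Gg eps \<delta> \<alpha> :: real and T K s e :: nat
    and f g :: "nat \<Rightarrow> 'a \<Rightarrow> real"
    and x yt y grad :: "nat \<Rightarrow> 'a"
  assumes Kconv: "convex Kset" and Kcomp: "compact Kset"
    and K0: "0 \<in> Kset" and KR: "Kset \<subseteq> cball 0 R" and Rpos: "R > 0"
    and fconv: "\<And>t. convex_on (cball 0 R) (f t)"
    and gconv: "\<And>t. convex_on (cball 0 R) (g t)"
    and fsub: "\<And>t z. z \<in> cball 0 R \<Longrightarrow> subgradients (f t) z \<noteq> {}
                     \<and> (\<forall>d\<in>subgradients (f t) z. norm d \<le> Gf)"
    and gsub: "\<And>t z. z \<in> cball 0 R \<Longrightarrow> subgradients (g t) z \<noteq> {}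
                     \<and> (\<forall>d\<in>subgradients (g t) z. norm d \<le> Gg)"
    and Kpos: "K > 0" and Kdvd: "K dvd T"
    and epspos: "eps > 0" and dpos: "\<delta> > 0" and apos: "\<alpha> > 0"
    and run: "dpp_run Kset R T K eps \<delta> \<alpha> f g x yt y grad"
    and se: "1 \<le> s" "s < e" "e \<le> T"
    and feas: "{z \<in> Kset. \<forall>t\<in>{s..e}. g t z \<le> 0} \<noteq> {}"
  shows "(\<forall>z\<in>{z \<in> Kset. \<forall>t\<in>{s..e}. g t z \<le> 0}.
            (\<Sum>t=s..e. f t (yt (blk K t))) - (\<Sum>t=s..e. f t z)
              \<le> 2 * K * R * (2 * Gf + R * \<alpha>) + Gf\<^sup>2 / (2 * \<alpha>) * T)
       \<and> (\<forall>c>0. (\<Sum>t=s..e. max (g t (yt (blk K t))) 0)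
              \<le> Gg\<^sup>2 / (2 * c) * T + 2 * c * R * (Gf * T / \<alpha> + R * K)
                 + 2 * \<alpha> * R\<^sup>2 / \<delta> + (Gf / \<alpha> + 4 * R) * (Gf * T / (2 * \<delta> * K))
                 + 4 * K * R * Gg)"
proof -
  interpret dpp_execution Kset R Gf Gg eps \<delta> \<alpha> T K f g x yt y grad
    using assms by unfold_locales
  obtain z0 where "z0 \<in> Kset" "\<forall>t\<in>{s..e}. g t z0 \<le> 0" using feas by auto
  then show ?thesis using regret_bound violation_bound se by auto
qed

end
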